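(* Fix $(\boldsymbol l,\boldsymbol m)\in\mathcal Z_{kn}$. For generic $\bar\alpha=(\alpha_1,\dots,\alpha_n)$ and $\bar z=(z_1,\dots,z_k)$, the common eigenspaces of the operators $$\mathcal H_a=\sum_{i=1}^n\alpha_i\,\xi_{ai}\partial_{ai}+\sum_{b\ne a}\frac{1}{z_a-z_b}\sum_{i,j=1}^n\xi_{ai}\partial_{aj}\,\xi_{bj}\partial_{bi},\qquad a=1,\dots,k,$$ restricted to $\mathfrak P_{kn}[\boldsymbol l,\boldsymbol m]$ are one-dimensional. Similarly, for generic $\bar\alpha,\bar z$, the common eigenspaces of the operators $$\mathcal H'_i=\sum_{a=1}^k z_a\,\xi_{ai}\partial_{ai}+\sum_{j\ne i}\frac{1}{\alpha_j-\alpha_i}\sum_{a,b=1}^k\xi_{ai}\partial_{bi}\,\xi_{bj}\partial_{aj},\qquad i=1,\dots,n,$$ restricted to $\mathfrak P_{kn}[\boldsymbol l,\boldsymbol m]$ are one-dimensional.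
   Context: $\mathfrak P_{kn}$ is the space of polynomials in pairwise anticommuting variables $\xi_{ai}$ ($a\le k$, $i\le n$); the left derivation $\partial_{ai}$ sends a monomial $\xi_{c_1}\cdots\xi_{c_l}$ to $(-1)^{s-1}$ times the monomial with the $s$-th factor removed if $c_s=(a,i)$, and to $0$ otherwise. $\mathcal Z_{kn}$ is the set of $(\boldsymbol l,\boldsymbol m)\in\mathbb Z_{\ge0}^k\times\mathbb Z_{\ge0}^n$ with $l_a\le n$, $m_i\le k$, $\sum l_a=\sum m_i$; $\mathfrak P_{kn}[\boldsymbol l,\boldsymbol m]$ is spanned by the monomials $\prod\xi_{ai}^{d_{ai}}$, $d_{ai}\in\{0,1\}$, with $\sum_ad_{ai}=m_i$, $\sum_id_{ai}=l_a$. The operators $\mathcal H_a$ and $\mathcal H'_i$ are the images of the Gaudin Hamiltonians $H^{\langle n,k\rangle}_a(\bar\alpha,\bar z)=\sum_i\alpha_i(e_{ii})_{(a)}+\sum_{b\ne a}\Omega_{(ab)}/(z_a-z_b)\in U(\mathfrak{gl}_n)^{\otimes k}$ and $H^{\langle k,n\rangle}_i(\bar z,-\bar\alpha)\in U(\mathfrak{gl}_k)^{\otimes n}$ under $(e^{\langle n\rangle}_{ij})_{(a)}\mapsto\xi_{ai}\partial_{aj}$ and $(e^{\langle k\rangle}_{ab})_{(i)}\mapsto\xi_{ai}\partial_{bi}$ respectively; the $\alpha_i$ are pairwise distinct and the $z_a$ pairwise distinct. *)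

theory Defs
  imports Main Complex_Main
begin

text \<open>Elements of the Grassmann algebra P_kn are represented by their coefficient
functions: a monomial is a finite set of index pairs (a,i) (0-based, a<k, i<n),
standing for the product of the corresponding xi's in increasing lexicographic order.\<close>

type_synonym grass = "(nat \<times> nat) set \<Rightarrow> complex"

definition lexless :: "nat \<times> nat \<Rightarrow> nat \<times> nat \<Rightarrow> bool" where
  "lexless x y \<longleftrightarrow> fst x < fst y \<or> (fst x = fst y \<and> snd x < snd y)"

text \<open>Left derivation partial_d: removes xi_d from a monomial with sign (-1)^(s-1),
s the position of xi_d.\<close>
definition dop :: "nat \<times> nat \<Rightarrow> grass \<Rightarrow> grass" where
  "dop d f = (\<lambda>T. if d \<notin> T
      then (-1) ^ card {x \<in> T. lexless x d} * f (insert d T) else 0)"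

definition xop :: "nat \<times> nat \<Rightarrow> grass \<Rightarrow> grass" where
  "xop c f = (\<lambda>T. if c \<in> T
      then (-1) ^ card {x \<in> T. lexless x c} * f (T - {c}) else 0)"

definition E :: "nat \<Rightarrow> nat \<Rightarrow> nat \<Rightarrow> nat \<Rightarrow> grass \<Rightarrow> grass" where
  "E a i b j f = xop (a, i) (dop (b, j) f)"

definition Pweight :: "nat \<Rightarrow> nat \<Rightarrow> (nat \<Rightarrow> nat) \<Rightarrow> (nat \<Rightarrow> nat) \<Rightarrow> grass set" where
  "Pweight k n l m = {f. \<forall>S. f S \<noteq> 0 \<longrightarrow>
      S \<subseteq> {..<k} \<times> {..<n} \<and>
      (\<forall>a<k. card {i. (a, i) \<in> S} = l a) \<and>
      (\<forall>i<n. card {a. (a, i) \<in> S} = m i)}"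

definition Zkn :: "nat \<Rightarrow> nat \<Rightarrow> (nat \<Rightarrow> nat) \<Rightarrow> (nat \<Rightarrow> nat) \<Rightarrow> bool" where
  "Zkn k n l m \<longleftrightarrow> (\<forall>a<k. l a \<le> n) \<and> (\<forall>i<n. m i \<le> k) \<and>
      (\<Sum>a<k. l a) = (\<Sum>i<n. m i)"

definition Hop :: "nat \<Rightarrow> nat \<Rightarrow> (nat \<Rightarrow> complex) \<Rightarrow> (nat \<Rightarrow> complex) \<Rightarrow> nat \<Rightarrow> grass \<Rightarrow> grass" where
  "Hop k n \<alpha> z a f = (\<lambda>T.
      (\<Sum>i<n. \<alpha> i * E a i a i f T)
    + (\<Sum>b\<in>{..<k} - {a}. (1 / (z a - z b)) *
         (\<Sum>i<n. \<Sum>j<n. E a i a j (E b j b i f) T)))"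

definition Hop' :: "nat \<Rightarrow> nat \<Rightarrow> (nat \<Rightarrow> complex) \<Rightarrow> (nat \<Rightarrow> complex) \<Rightarrow> nat \<Rightarrow> grass \<Rightarrow> grass" where
  "Hop' k n \<alpha> z i f = (\<lambda>T.
      (\<Sum>a<k. z a * E a i a i f T)
    + (\<Sum>j\<in>{..<n} - {i}. (1 / (\<alpha> j - \<alpha> i)) *
         (\<Sum>a<k. \<Sum>b<k. E a i b i (E b j a j f) T)))"

definition common_eigenspaces_one_dim :: "nat set \<Rightarrow> (nat \<Rightarrow> grass \<Rightarrow> grass) \<Rightarrow> grass set \<Rightarrow> bool" where
  "common_eigenspaces_one_dim I H V \<longleftrightarrow>
     (\<forall>\<mu> :: nat \<Rightarrow> complex.
        let Eig = {v \<in> V. \<forall>a\<in>I. H a v = (\<lambda>T. \<mu> a * v T)} in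
        Eig \<noteq> {\<lambda>T. 0} \<longrightarrow> (\<exists>v. v \<noteq> (\<lambda>T. 0) \<and> Eig = {(\<lambda>T. c * v T) | c. True}))"

inductive polyfun :: "nat \<Rightarrow> nat \<Rightarrow> ((nat \<Rightarrow> complex) \<Rightarrow> (nat \<Rightarrow> complex) \<Rightarrow> complex) \<Rightarrow> bool"
  for n k where
  const: "polyfun n k (\<lambda>\<alpha> z. c)"
| avar: "i < n \<Longrightarrow> polyfun n k (\<lambda>\<alpha> z. \<alpha> i)"
| zvar: "a < k \<Longrightarrow> polyfun n k (\<lambda>\<alpha> z. z a)"
| add: "polyfun n k p \<Longrightarrow> polyfun n k q \<Longrightarrow> polyfun n k (\<lambda>\<alpha> z. p \<alpha> z + q \<alpha> z)"
| mult: "polyfun n k p \<Longrightarrow> polyfun n k q \<Longrightarrow> polyfun n k (\<lambda>\<alpha> z. p \<alpha> z * q \<alpha> z)"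

definition generic :: "nat \<Rightarrow> nat \<Rightarrow> ((nat \<Rightarrow> complex) \<Rightarrow> (nat \<Rightarrow> complex) \<Rightarrow> bool) \<Rightarrow> bool" where
  "generic n k Q \<longleftrightarrow> (\<exists>P. polyfun n k P \<and> (\<exists>\<alpha> z. P \<alpha> z \<noteq> 0) \<and>
      (\<forall>\<alpha> z. inj_on \<alpha> {..<n} \<longrightarrow> inj_on z {..<k} \<longrightarrow> P \<alpha> z \<noteq> 0 \<longrightarrow> Q \<alpha> z))"

end

theory Submission
  imports Defs "Jordan_Normal_Form.Determinant" "HOL-Library.Nat_Bijection"
begin

text \<open>
  On a common eigenvector of the operators H_a, the combination sum_a z_a H_a acts as D + C.
  Here D is diagonal in the monomial basis, multiplying xi_S by the sum of z_a alpha_i over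
  (a, i) \<in> S, and C = (1/2) sum over a \<noteq> b of Omega_ab does not depend on alpha and z: this uses
  Omega_ab = Omega_ba (the even operators xi_c \<partial>_d with disjoint indices commute) and
  z_a / (z_a - z_b) + z_b / (z_b - z_a) = 1. Likewise sum_i alpha_i H'_i = D - (1/2) sum over
  i \<noteq> j of Omega'_ij.

  If the Krylov matrix of a square matrix M, with rows 1^T M^j, is invertible, then the functional
  1^T separates eigenvectors of M with a common eigenvalue, so every eigenspace of M has dimension
  at most one. The Krylov determinant of D + C is a polynomial in alpha and z. It does not vanish
  identically: replacing alpha by alpha / s turns D + C into (D_0 + s C) / s, and at s = 0 the
  Krylov matrix of the diagonal matrix D_0 is a Vandermonde matrix, which is invertible for
  alpha_i = 2^i and z_a = 2^(a n) because distinct monomials then get distinct binary numbers as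
  diagonal entries.
\<close>

section \<open>Krylov matrices\<close>

definition krylov_mat :: "'a::comm_ring_1 mat \<Rightarrow> 'a mat" where
  "krylov_mat M = mat (dim_row M) (dim_row M) (\<lambda>(j, s). \<Sum>t = 0..<dim_row M. (M ^\<^sub>m j) $$ (t, s))"

lemma pow_mat_mult_eigenvector:
  fixes M :: "'a::field mat"
  assumes M: "M \<in> carrier_mat N N" and v: "v \<in> carrier_vec N" and eig: "M *\<^sub>v v = \<mu> \<cdot>\<^sub>v v"
  shows "M ^\<^sub>m j *\<^sub>v v = \<mu> ^ j \<cdot>\<^sub>v v"
proof (induction j)
  case 0
  show ?case using M v by simp
next
  case (Suc j)
  have "M ^\<^sub>m Suc j *\<^sub>v v = M ^\<^sub>m j *\<^sub>v (M *\<^sub>v v)"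
    using M v by (simp add: assoc_mult_mat_vec[of _ N N _ N])
  also have "\<dots> = \<mu> \<cdot>\<^sub>v (M ^\<^sub>m j *\<^sub>v v)"
    using M v by (simp add: eig mult_mat_vec[OF pow_carrier_mat[OF M, of j] v])
  finally show ?case using Suc by (simp add: smult_smult_assoc mult.commute)
qed

lemma krylov_mat_mult_eigenvector:
  fixes M :: "'a::field mat"
  assumes M: "M \<in> carrier_mat N N" and v: "v \<in> carrier_vec N" and eig: "M *\<^sub>v v = \<mu> \<cdot>\<^sub>v v"
  shows "krylov_mat M *\<^sub>v v = vec N (\<lambda>j. \<mu> ^ j * (\<Sum>t = 0..<N. v $ t))"
proof (rule eq_vecI)
  fix j assume j: "j < dim_vec (vec N (\<lambda>j. \<mu> ^ j * (\<Sum>t = 0..<N. v $ t)))"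
  have "(krylov_mat M *\<^sub>v v) $ j = (\<Sum>s = 0..<N. (\<Sum>t = 0..<N. (M ^\<^sub>m j) $$ (t, s)) * v $ s)"
    using M v j by (simp add: krylov_mat_def scalar_prod_def)
  also have "\<dots> = (\<Sum>s = 0..<N. \<Sum>t = 0..<N. (M ^\<^sub>m j) $$ (t, s) * v $ s)"
    by (simp add: sum_distrib_right)
  also have "\<dots> = (\<Sum>t = 0..<N. \<Sum>s = 0..<N. (M ^\<^sub>m j) $$ (t, s) * v $ s)"
    by (rule sum.swap)
  also have "\<dots> = (\<Sum>t = 0..<N. (M ^\<^sub>m j *\<^sub>v v) $ t)"
    using M v by (simp add: scalar_prod_def)
  also have "\<dots> = \<mu> ^ j * (\<Sum>t = 0..<N. v $ t)"
    using v by (simp add: pow_mat_mult_eigenvector[OF M v eig] sum_distrib_left)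
  finally show "(krylov_mat M *\<^sub>v v) $ j = vec N (\<lambda>j. \<mu> ^ j * (\<Sum>t = 0..<N. v $ t)) $ j"
    using j by simp
qed (use M in \<open>simp add: krylov_mat_def\<close>)

lemma krylov_mat_carrier [simp]: "M \<in> carrier_mat N N \<Longrightarrow> krylov_mat M \<in> carrier_mat N N"
  by (simp add: krylov_mat_def)

lemma eigenvectors_parallel_if_det_krylov_mat_nonzero:
  fixes M :: "'a::field mat"
  assumes M: "M \<in> carrier_mat N N" and det: "det (krylov_mat M) \<noteq> 0"
    and v: "v \<in> carrier_vec N" "M *\<^sub>v v = \<mu> \<cdot>\<^sub>v v" "v \<noteq> 0\<^sub>v N"
    and w: "w \<in> carrier_vec N" "M *\<^sub>v w = \<mu> \<cdot>\<^sub>v w"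
  shows "\<exists>c. w = c \<cdot>\<^sub>v v"
proof -
  define \<sigma> where "\<sigma> u = (\<Sum>t = 0..<N. u $ t)" for u :: "'a vec"
  have kernel: "u = 0\<^sub>v N" if "u \<in> carrier_vec N" "krylov_mat M *\<^sub>v u = 0\<^sub>v N" for u
    using that det det_0_iff_vec_prod_zero_field[OF krylov_mat_carrier[OF M]] by blast
  have Kv: "krylov_mat M *\<^sub>v v = vec N (\<lambda>j. \<mu> ^ j * \<sigma> v)"
    and Kw: "krylov_mat M *\<^sub>v w = vec N (\<lambda>j. \<mu> ^ j * \<sigma> w)"
    unfolding \<sigma>_def using krylov_mat_mult_eigenvector M v w by blast+
  have "\<sigma> v \<noteq> 0"
  proof
    assume "\<sigma> v = 0"
    then have "krylov_mat M *\<^sub>v v = 0\<^sub>v N" unfolding Kv by auto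
    then show False using kernel v by blast
  qed
  define x where "x = \<sigma> v \<cdot>\<^sub>v w - \<sigma> w \<cdot>\<^sub>v v"
  have "krylov_mat M *\<^sub>v x = \<sigma> v \<cdot>\<^sub>v (krylov_mat M *\<^sub>v w) - \<sigma> w \<cdot>\<^sub>v (krylov_mat M *\<^sub>v v)"
    unfolding x_def using M v w
    by (simp add: mult_minus_distrib_mat_vec[of _ N N] mult_mat_vec[of _ N N])
  also have "\<dots> = 0\<^sub>v N"
    unfolding Kv Kw by (auto simp: mult.left_commute)
  finally have "x = 0\<^sub>v N" using kernel v w unfolding x_def by simp
  have "w = (\<sigma> w / \<sigma> v) \<cdot>\<^sub>v v"
  proof (rule eq_vecI)
    fix i assume "i < dim_vec ((\<sigma> w / \<sigma> v) \<cdot>\<^sub>v v)"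
    then have i: "i < N" using v by simp
    then have "x $ i = 0" using \<open>x = 0\<^sub>v N\<close> by simp
    then show "w $ i = ((\<sigma> w / \<sigma> v) \<cdot>\<^sub>v v) $ i"
      using \<open>\<sigma> v \<noteq> 0\<close> i v w unfolding x_def by (simp add: field_simps)
  qed (use v w in simp)
  then show ?thesis ..
qed

section \<open>Polynomial dependence on parameters\<close>

locale fun_subalgebra =
  fixes R :: "('p \<Rightarrow> 'a::comm_ring_1) \<Rightarrow> bool"
  assumes const: "R (\<lambda>x. c)"
    and add: "R f \<Longrightarrow> R g \<Longrightarrow> R (\<lambda>x. f x + g x)"
    and mult: "R f \<Longrightarrow> R g \<Longrightarrow> R (\<lambda>x. f x * g x)"
begin

lemma sum: "(\<And>i. i \<in> I \<Longrightarrow> R (f i)) \<Longrightarrow> R (\<lambda>x. \<Sum>i\<in>I. f i x)"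
  by (induction I rule: infinite_finite_induct) (auto intro: const add)

lemma prod: "(\<And>i. i \<in> I \<Longrightarrow> R (f i)) \<Longrightarrow> R (\<lambda>x. \<Prod>i\<in>I. f i x)"
  by (induction I rule: infinite_finite_induct) (auto intro: const mult)

lemma pow_mat_entry:
  assumes M: "\<And>x. M x \<in> carrier_mat N N"
    and entries: "\<And>t s. t < N \<Longrightarrow> s < N \<Longrightarrow> R (\<lambda>x. M x $$ (t, s))"
  shows "t < N \<Longrightarrow> s < N \<Longrightarrow> R (\<lambda>x. (M x ^\<^sub>m j) $$ (t, s))"
proof (induction j arbitrary: t s)
  case 0
  then show ?case using carrier_matD(1)[OF M] by (simp add: const)
next
  case (Suc j)
  have "(\<lambda>x. (M x ^\<^sub>m Suc j) $$ (t, s)) = (\<lambda>x. \<Sum>r = 0..<N. (M x ^\<^sub>m j) $$ (t, r) * M x $$ (r, s))"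
    using carrier_matD[OF M] Suc.prems by (simp add: scalar_prod_def)
  then show ?case
    using Suc.prems by (auto intro!: sum mult Suc.IH entries)
qed

lemma det:
  assumes A: "\<And>x. A x \<in> carrier_mat N N"
    and entries: "\<And>i j. i < N \<Longrightarrow> j < N \<Longrightarrow> R (\<lambda>x. A x $$ (i, j))"
  shows "R (\<lambda>x. det (A x))"
  unfolding det_def'[OF A]
  by (intro sum mult const prod entries) (auto simp: permutes_in_image)

lemma det_krylov_mat:
  assumes M: "\<And>x. M x \<in> carrier_mat N N"
    and entries: "\<And>t s. t < N \<Longrightarrow> s < N \<Longrightarrow> R (\<lambda>x. M x $$ (t, s))"
  shows "R (\<lambda>x. det (krylov_mat (M x)))"
proof (rule det)
  fix j s assume "j < N" "s < N"
  then show "R (\<lambda>x. krylov_mat (M x) $$ (j, s))"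
    using carrier_matD(1)[OF M] by (auto simp: krylov_mat_def intro!: sum pow_mat_entry[OF M entries])
qed (use M in simp)

end

interpretation polynomial_functions: fun_subalgebra "\<lambda>f :: 'a::comm_ring_1 \<Rightarrow> 'a. \<exists>p. f = poly p"
proof
  show "\<exists>p. (\<lambda>x. c) = poly p" for c :: 'a
    by (rule exI[of _ "[:c:]"]) (simp add: fun_eq_iff)
  show "\<exists>p. (\<lambda>x. f x + g x) = poly p" if f: "\<exists>p. f = poly p" and g: "\<exists>p. g = poly p" for f g :: "'a \<Rightarrow> 'a"
  proof -
    obtain p q where "f = poly p" "g = poly q" using f g by blast
    then have "(\<lambda>x. f x + g x) = poly (p + q)" by (simp add: fun_eq_iff)
    then show ?thesis ..
  qed
  show "\<exists>p. (\<lambda>x. f x * g x) = poly p" if f: "\<exists>p. f = poly p" and g: "\<exists>p. g = poly p" for f g :: "'a \<Rightarrow> 'a"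
  proof -
    obtain p q where "f = poly p" "g = poly q" using f g by blast
    then have "(\<lambda>x. f x * g x) = poly (p * q)" by (simp add: fun_eq_iff)
    then show ?thesis ..
  qed
qed

lemma det_mat_diag_mult:
  assumes "A \<in> carrier_mat n n"
  shows "det (mat_diag n f * A) = prod f {0..<n} * det A"
  using assms
  by (simp add: mat_diag_mult_left det_def'[of _ n] prod.distrib sum_distrib_left mult_ac)

lemma dim_mat_diag [simp]: "dim_row (mat_diag N d) = N" "dim_col (mat_diag N d) = N"
  by (simp_all add: mat_diag_def)

lemma pow_mat_diag: "mat_diag N d ^\<^sub>m j = mat_diag N (\<lambda>t. d t ^ j)"
  by (induction j) (simp_all add: power_Suc2 del: power_Suc flip: mat_diag_one)

lemma krylov_mat_diag: "krylov_mat (mat_diag N d) = mat N N (\<lambda>(j, s). d s ^ j)"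
  by (rule eq_matI) (simp_all add: krylov_mat_def pow_mat_diag, simp add: mat_diag_def)

lemma krylov_mat_smult:
  assumes "M \<in> carrier_mat N N"
  shows "krylov_mat (c \<cdot>\<^sub>m M) = mat_diag N (\<lambda>j. c ^ j) * krylov_mat M"
proof -
  have "(c \<cdot>\<^sub>m M) ^\<^sub>m j = c ^ j \<cdot>\<^sub>m M ^\<^sub>m j" for j
    using assms
    by (induction j) (auto simp: mult_smult_distrib[of _ N N] mult_smult_assoc_mat[of _ N N] intro!: eq_matI)
  then show ?thesis
    unfolding mat_diag_mult_left[OF krylov_mat_carrier[OF assms]]
    using assms by (intro eq_matI) (auto simp: krylov_mat_def sum_distrib_left)
qed

lemma det_vandermonde_nonzero:
  fixes d :: "nat \<Rightarrow> 'a::field"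
  assumes "inj_on d {0..<N}"
  shows "det (mat N N (\<lambda>(j, s). d s ^ j)) \<noteq> 0"
proof
  let ?V = "mat N N (\<lambda>(j, s). d s ^ j)"
  assume "det ?V = 0"
  then have "det (transpose_mat ?V) = 0" by (simp add: det_transpose[of _ N])
  then obtain w where w: "w \<in> carrier_vec N" "w \<noteq> 0\<^sub>v N" "transpose_mat ?V *\<^sub>v w = 0\<^sub>v N"
    using det_0_iff_vec_prod_zero_field[of "transpose_mat ?V" N] by auto
  define q where "q = (\<Sum>j<N. monom (w $ j) j)"
  obtain j0 where j0: "j0 < N" "w $ j0 \<noteq> 0" using w(1,2) by (metis eq_vecI carrier_vecD index_zero_vec)
  have "coeff q j0 = w $ j0"
    using j0(1) by (simp add: q_def coeff_sum)
  then have "q \<noteq> 0" using j0 by auto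
  have "degree q < N"
    unfolding q_def using j0 by (intro degree_sum_less) (auto intro: le_less_trans[OF degree_monom_le])
  have "poly q (d s) = (transpose_mat ?V *\<^sub>v w) $ s" if "s < N" for s
    using that w(1) by (simp add: q_def poly_sum poly_monom scalar_prod_def lessThan_atLeast0 mult.commute)
  then have "d ` {0..<N} \<subseteq> {x. poly q x = 0}" using w(3) by auto
  then have "card (d ` {0..<N}) \<le> card {x. poly q x = 0}"
    using poly_roots_finite[OF \<open>q \<noteq> 0\<close>] by (rule card_mono[rotated])
  also have "\<dots> \<le> degree q" by (rule card_poly_roots_bound[OF \<open>q \<noteq> 0\<close>])
  finally show False using \<open>degree q < N\<close> card_image[OF assms] by simp
qed

lemma exists_det_krylov_mat_nonzero:
  fixes d :: "nat \<Rightarrow> 'a::field_char_0"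
  assumes d: "inj_on d {0..<N}" and C: "C \<in> carrier_mat N N"
  shows "\<exists>s. s \<noteq> 0 \<and> det (krylov_mat (mat_diag N (\<lambda>t. d t / s) + C)) \<noteq> 0"
proof -
  define A where "A s = mat_diag N d + s \<cdot>\<^sub>m C" for s
  have A: "A s \<in> carrier_mat N N" for s using C by (simp add: A_def)
  have "\<exists>p. (\<lambda>s. det (krylov_mat (A s))) = poly p"
  proof (rule polynomial_functions.det_krylov_mat[OF A])
    fix t u assume "t < N" "u < N"
    then have "(\<lambda>s. A s $$ (t, u)) = poly [:mat_diag N d $$ (t, u), C $$ (t, u):]"
      using C by (auto simp: A_def)
    then show "\<exists>p. (\<lambda>s. A s $$ (t, u)) = poly p" ..
  qed
  then obtain q where q: "det (krylov_mat (A s)) = poly q s" for s by metis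
  have "A 0 = mat_diag N d"
    using C by (intro eq_matI) (auto simp: A_def mat_diag_def)
  then have "poly q 0 \<noteq> 0"
    using det_vandermonde_nonzero[OF d] by (simp flip: q add: krylov_mat_diag)
  then have "finite {s. poly q s = 0}" by (intro poly_roots_finite) auto
  then obtain s where s: "poly q s \<noteq> 0" "s \<noteq> 0"
    using ex_new_if_finite[OF infinite_UNIV_char_0, of "insert 0 {s. poly q s = 0}"] by auto
  have "mat_diag N (\<lambda>t. d t / s) + C = (1 / s) \<cdot>\<^sub>m A s"
    using C s(2) by (intro eq_matI) (auto simp: A_def mat_diag_def field_simps)
  then have "det (krylov_mat (mat_diag N (\<lambda>t. d t / s) + C)) = (\<Prod>j = 0..<N. (1 / s) ^ j) * poly q s"
    by (simp add: krylov_mat_smult[OF A] det_mat_diag_mult[OF krylov_mat_carrier[OF A]] q)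
  then show ?thesis using s by auto
qed

section \<open>Signs in the Grassmann algebra\<close>

definition lex_sign :: "(nat \<times> nat) set \<Rightarrow> nat \<times> nat \<Rightarrow> complex" where
  "lex_sign T y = (-1) ^ card {x \<in> T. lexless x y}"

definition lex_flip :: "nat \<times> nat \<Rightarrow> nat \<times> nat \<Rightarrow> complex" where
  "lex_flip x y = (if lexless x y then -1 else 1)"

lemma lex_flip_swap: "x \<noteq> y \<Longrightarrow> lex_flip y x = - lex_flip x y"
  unfolding lex_flip_def lexless_def by (cases x; cases y) auto

lemma lex_flip_mult_swap: "x \<noteq> y \<Longrightarrow> lex_flip x y * lex_flip y x = -1"
  unfolding lex_flip_def lexless_def by (cases x; cases y) auto

lemma lex_sign_insert:
  assumes "finite T" "x \<notin> T"
  shows "lex_sign (insert x T) y = lex_flip x y * lex_sign T y"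
proof (cases "lexless x y")
  case True
  then have "{u \<in> insert x T. lexless u y} = insert x {u \<in> T. lexless u y}" by auto
  then show ?thesis using True assms by (simp add: lex_sign_def lex_flip_def)
next
  case False
  then have "{u \<in> insert x T. lexless u y} = {u \<in> T. lexless u y}" by auto
  then show ?thesis using False by (simp add: lex_sign_def lex_flip_def)
qed

lemma lex_sign_insert_self: "lex_sign (insert y T) y = lex_sign T y"
proof -
  have "{u \<in> insert y T. lexless u y} = {u \<in> T. lexless u y}" by (auto simp: lexless_def)
  then show ?thesis by (simp add: lex_sign_def)
qed

lemma lex_sign_square: "lex_sign T y * lex_sign T y = 1"
  by (simp add: lex_sign_def flip: power_mult_distrib)

lemma xop_apply: "xop c f T = (if c \<in> T then lex_sign T c * f (T - {c}) else 0)"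
  by (simp add: xop_def lex_sign_def)

lemma dop_apply: "dop d f T = (if d \<notin> T then lex_sign T d * f (insert d T) else 0)"
  by (simp add: dop_def lex_sign_def)

text \<open>On an infinite monomial \<open>lex_sign\<close> is junk (the cardinality of an infinite set is 0), so the
  sign rules below only hold for elements vanishing on infinite monomials, as all elements of
  the weight spaces do.\<close>

definition finite_monomials :: "grass \<Rightarrow> bool" where
  "finite_monomials f \<longleftrightarrow> (\<forall>S. infinite S \<longrightarrow> f S = 0)"

lemma finite_monomials_dop: "finite_monomials f \<Longrightarrow> finite_monomials (dop d f)"
  by (simp add: finite_monomials_def dop_apply)

lemma xop_anticommute:
  assumes "c \<noteq> c'" "finite_monomials f"
  shows "xop c (xop c' f) = (\<lambda>T. - xop c' (xop c f) T)"
proof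
  fix T
  show "xop c (xop c' f) T = - xop c' (xop c f) T"
  proof (cases "finite T \<and> c \<in> T \<and> c' \<in> T")
    case True
    define R where "R = T - {c, c'}"
    have R: "finite R" "c \<notin> R" "c' \<notin> R" using True unfolding R_def by auto
    have T: "T - {c} = insert c' R" "T - {c'} = insert c R" "insert c' R - {c'} = R" "insert c R - {c} = R"
      using True assms(1) R unfolding R_def by auto
    have "T = insert c' (insert c R)" "T = insert c (insert c' R)"
      using True unfolding R_def by auto
    then have "lex_sign T c = lex_flip c' c * lex_sign R c" "lex_sign T c' = lex_flip c c' * lex_sign R c'"
      using R assms(1) by (simp_all add: lex_sign_insert lex_sign_insert_self)
    then show ?thesis
      using True by (simp add: xop_apply T lex_sign_insert_self lex_flip_swap[OF assms(1)])
  next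
    case False
    then show ?thesis using assms(2) by (auto simp: xop_apply finite_monomials_def)
  qed
qed

lemma dop_anticommute:
  assumes "d \<noteq> d'" "finite_monomials f"
  shows "dop d (dop d' f) = (\<lambda>T. - dop d' (dop d f) T)"
proof
  fix T
  show "dop d (dop d' f) T = - dop d' (dop d f) T"
  proof (cases "finite T \<and> d \<notin> T \<and> d' \<notin> T")
    case True
    then show ?thesis
      by (simp add: dop_apply lex_sign_insert lex_flip_swap[OF assms(1)] insert_commute[of d' d])
  next
    case False
    then show ?thesis using assms(2) by (auto simp: dop_apply finite_monomials_def)
  qed
qed

lemma xop_dop_anticommute:
  assumes "c \<noteq> d" "finite_monomials f"
  shows "xop c (dop d f) = (\<lambda>T. - dop d (xop c f) T)"
proof
  fix T
  show "xop c (dop d f) T = - dop d (xop c f) T"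
  proof (cases "finite T \<and> c \<in> T \<and> d \<notin> T")
    case True
    define R where "R = T - {c}"
    have R: "finite R" "c \<notin> R" "d \<notin> R" "T = insert c R" using True unfolding R_def by auto
    have "insert d T - {c} = insert d R" using assms(1) R by auto
    then have "dop d (xop c f) T = (lex_flip c d * lex_flip d c) * (lex_sign R c * lex_sign R d * f (insert d R))"
      using True R by (simp add: xop_apply dop_apply lex_sign_insert lex_sign_insert_self mult_ac)
    also have "\<dots> = - xop c (dop d f) T"
      using True R assms(1)
      by (simp add: xop_apply dop_apply lex_sign_insert_self lex_flip_mult_swap[OF assms(1)])
    finally show ?thesis by simp
  next
    case False
    then show ?thesis using assms by (auto simp: xop_apply dop_apply finite_monomials_def)
  qed
qed

lemma xop_uminus: "xop c (\<lambda>T. - f T) = (\<lambda>T. - xop c f T)"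
  by (simp add: xop_apply fun_eq_iff)

lemma xop_dop_commute:
  assumes "c \<noteq> c'" "c \<noteq> d'" "d \<noteq> c'" "d \<noteq> d'" and f: "finite_monomials f"
  shows "xop c (dop d (xop c' (dop d' f))) = xop c' (dop d' (xop c (dop d f)))"
proof -
  have f': "finite_monomials (dop d' f)" "finite_monomials (dop d f)"
    "finite_monomials (dop d (dop d' f))"
    using f by (simp_all add: finite_monomials_dop)
  have "xop c (dop d (xop c' (dop d' f))) = xop c (\<lambda>T. - xop c' (dop d (dop d' f)) T)"
    by (simp add: xop_dop_anticommute[OF assms(3)[symmetric] f'(1)])
  also have "\<dots> = (\<lambda>T. xop c' (xop c (dop d (dop d' f))) T)"
    by (simp add: xop_uminus xop_anticommute[OF assms(1) f'(3)])
  also have "\<dots> = (\<lambda>T. - xop c' (xop c (dop d' (dop d f))) T)"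
    by (simp add: xop_uminus dop_anticommute[OF assms(4) f])
  also have "\<dots> = xop c' (dop d' (xop c (dop d f)))"
    by (simp add: xop_uminus xop_dop_anticommute[OF assms(2) f'(2)])
  finally show ?thesis .
qed

section \<open>Linear operators in the monomial basis\<close>

definition grass_linear :: "(grass \<Rightarrow> grass) \<Rightarrow> bool" where
  "grass_linear L \<longleftrightarrow> (\<forall>f g. L (\<lambda>T. f T + g T) = (\<lambda>T. L f T + L g T)) \<and>
      (\<forall>a f. L (\<lambda>T. a * f T) = (\<lambda>T. a * L f T))"

lemma grass_linear_add: "grass_linear L \<Longrightarrow> L (\<lambda>T. f T + g T) = (\<lambda>T. L f T + L g T)"
  by (simp add: grass_linear_def)

lemma grass_linear_smult: "grass_linear L \<Longrightarrow> L (\<lambda>T. a * f T) = (\<lambda>T. a * L f T)"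
  by (simp add: grass_linear_def)

lemma grass_linear_zero: "grass_linear L \<Longrightarrow> L (\<lambda>T. 0) = (\<lambda>T. 0)"
  using grass_linear_smult[of L 0 "\<lambda>T. 0"] by simp

lemma grass_linear_xop: "grass_linear (xop c)"
  by (simp add: grass_linear_def xop_apply fun_eq_iff algebra_simps)

lemma grass_linear_dop: "grass_linear (dop d)"
  by (simp add: grass_linear_def dop_apply fun_eq_iff algebra_simps)

lemma grass_linear_comp: "grass_linear L \<Longrightarrow> grass_linear L' \<Longrightarrow> grass_linear (\<lambda>f. L (L' f))"
  by (simp add: grass_linear_def)

lemma grass_linear_smult_op: "grass_linear L \<Longrightarrow> grass_linear (\<lambda>f T. a * L f T)"
  by (simp add: grass_linear_def fun_eq_iff algebra_simps)

lemma grass_linear_sum_op: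
  "(\<And>y. y \<in> Y \<Longrightarrow> grass_linear (L y)) \<Longrightarrow> grass_linear (\<lambda>f T. \<Sum>y\<in>Y. L y f T)"
  by (simp add: grass_linear_def fun_eq_iff sum.distrib sum_distrib_left)

lemma grass_linear_sum:
  assumes "grass_linear L"
  shows "L (\<lambda>T. \<Sum>x\<in>A. g x T) = (\<lambda>T. \<Sum>x\<in>A. L (g x) T)"
proof (induction A rule: infinite_finite_induct)
  case (insert x A)
  then show ?case by (simp add: grass_linear_add[OF assms])
qed (simp_all add: grass_linear_zero[OF assms])

definition basis_monomial :: "(nat \<times> nat) set \<Rightarrow> grass" where
  "basis_monomial S = (\<lambda>T. if T = S then 1 else 0)"

lemma grass_linear_expand:
  assumes L: "grass_linear L" and "finite B" and supp: "\<And>S. f S \<noteq> 0 \<Longrightarrow> S \<in> B"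
  shows "L f T = (\<Sum>S\<in>B. f S * L (basis_monomial S) T)"
proof -
  have "(\<Sum>S\<in>B. f S * basis_monomial S T) = f T" for T
  proof -
    have "(\<Sum>S\<in>B. f S * basis_monomial S T) = (\<Sum>S\<in>B. if T = S then f S else 0)"
      by (intro sum.cong) (auto simp: basis_monomial_def)
    then show ?thesis using assms(2) supp by auto
  qed
  then have "f = (\<lambda>T. \<Sum>S\<in>B. f S * basis_monomial S T)" by simp
  then have "L f = L (\<lambda>T. \<Sum>S\<in>B. f S * basis_monomial S T)" by simp
  then show ?thesis by (simp add: grass_linear_sum[OF L] grass_linear_smult[OF L])
qed

definition coords :: "(nat \<Rightarrow> (nat \<times> nat) set) \<Rightarrow> nat \<Rightarrow> grass \<Rightarrow> complex vec" where
  "coords e N f = vec N (\<lambda>t. f (e t))"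

definition op_mat :: "(nat \<Rightarrow> (nat \<times> nat) set) \<Rightarrow> nat \<Rightarrow> (grass \<Rightarrow> grass) \<Rightarrow> complex mat" where
  "op_mat e N L = mat N N (\<lambda>(t, u). L (basis_monomial (e u)) (e t))"

lemma op_mat_mult_coords:
  assumes L: "grass_linear L" and e: "bij_betw e {0..<N} B" and supp: "\<And>S. f S \<noteq> 0 \<Longrightarrow> S \<in> B"
  shows "op_mat e N L *\<^sub>v coords e N f = coords e N (L f)"
proof (rule eq_vecI)
  fix t assume "t < dim_vec (coords e N (L f))"
  then have t: "t < N" by (simp add: coords_def)
  have "(op_mat e N L *\<^sub>v coords e N f) $ t = (\<Sum>u = 0..<N. f (e u) * L (basis_monomial (e u)) (e t))"
    using t by (simp add: op_mat_def coords_def scalar_prod_def mult.commute)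
  also have "\<dots> = (\<Sum>S\<in>B. f S * L (basis_monomial S) (e t))"
    using e by (rule sum.reindex_bij_betw)
  also have "\<dots> = L f (e t)"
    using grass_linear_expand[OF L _ supp] bij_betw_finite[OF e] by simp
  finally show "(op_mat e N L *\<^sub>v coords e N f) $ t = coords e N (L f) $ t"
    using t by (simp add: coords_def)
qed (simp add: op_mat_def coords_def)

lemma mat_diag_mult_coords:
  "mat_diag N (\<lambda>t. d (e t)) *\<^sub>v coords e N f = coords e N (\<lambda>T. d T * f T)"
proof (rule eq_vecI)
  fix t assume "t < dim_vec (coords e N (\<lambda>T. d T * f T))"
  then have "t < N" by (simp add: coords_def)
  then show "(mat_diag N (\<lambda>t. d (e t)) *\<^sub>v coords e N f) $ t = coords e N (\<lambda>T. d T * f T) $ t"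
    by (simp add: mat_diag_def coords_def scalar_prod_def) (subst sum.remove[of _ t]; simp)
qed (simp add: coords_def)

section \<open>One-dimensional eigenspaces for generic parameters\<close>

lemma common_eigenspaces_one_dimI:
  assumes H_smult: "\<And>a c f. H a (\<lambda>T. c * f T) = (\<lambda>T. c * H a f T)"
    and V_smult: "\<And>c f. f \<in> V \<Longrightarrow> (\<lambda>T. c * f T) \<in> V" and V_zero: "(\<lambda>T. 0) \<in> V"
    and parallel: "\<And>\<mu> v w. v \<in> V \<Longrightarrow> w \<in> V \<Longrightarrow> \<forall>a\<in>I. H a v = (\<lambda>T. \<mu> a * v T) \<Longrightarrow>
        \<forall>a\<in>I. H a w = (\<lambda>T. \<mu> a * w T) \<Longrightarrow> v \<noteq> (\<lambda>T. 0) \<Longrightarrow> \<exists>c. w = (\<lambda>T. c * v T)"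
  shows "common_eigenspaces_one_dim I H V"
  unfolding common_eigenspaces_one_dim_def Let_def
proof (intro allI impI)
  fix \<mu> :: "nat \<Rightarrow> complex"
  let ?E = "{v \<in> V. \<forall>a\<in>I. H a v = (\<lambda>T. \<mu> a * v T)}"
  assume "?E \<noteq> {\<lambda>T. 0}"
  moreover have "(\<lambda>T. 0) \<in> ?E"
    using V_zero H_smult[of _ 0] by simp
  ultimately obtain v where v: "v \<in> ?E" "v \<noteq> (\<lambda>T. 0)" by blast
  have "?E = {(\<lambda>T. c * v T) | c. True}"
  proof (intro equalityI subsetI)
    fix w assume "w \<in> ?E"
    then show "w \<in> {(\<lambda>T. c * v T) | c. True}" using parallel v by blast
  next
    fix w assume "w \<in> {(\<lambda>T. c * v T) | c. True}"
    then obtain c where "w = (\<lambda>T. c * v T)" by blast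
    then show "w \<in> ?E" using v(1) V_smult H_smult by (auto simp: mult.left_commute)
  qed
  then show "\<exists>v. v \<noteq> (\<lambda>T. 0) \<and> ?E = {(\<lambda>T. c * v T) | c. True}" using v(2) by blast
qed

lemma coords_inject:
  assumes e: "bij_betw e {0..<N} B"
    and f: "\<forall>S. f S \<noteq> 0 \<longrightarrow> S \<in> B" and g: "\<forall>S. g S \<noteq> 0 \<longrightarrow> S \<in> B"
  shows "coords e N f = coords e N g \<longleftrightarrow> f = g"
proof
  assume eq: "coords e N f = coords e N g"
  show "f = g"
  proof
    fix T show "f T = g T"
    proof (cases "T \<in> B")
      case True
      then obtain t where "t < N" "T = e t" using e by (force simp: bij_betw_def)
      then show ?thesis using eq by (auto simp: coords_def vec_eq_iff)
    next
      case False
      then have "f T = 0" "g T = 0" using f g by blast+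
      then show ?thesis by simp
    qed
  qed
qed simp

lemma coords_smult: "coords e N (\<lambda>T. c * f T) = c \<cdot>\<^sub>v coords e N f"
  by (auto simp: coords_def)

lemma common_eigenspaces_one_dim_if_det_krylov_mat_nonzero:
  assumes e: "bij_betw e {0..<N} B" and V: "V = {f. \<forall>S. f S \<noteq> 0 \<longrightarrow> S \<in> B}"
    and H_smult: "\<And>a c f. H a (\<lambda>T. c * f T) = (\<lambda>T. c * H a f T)"
    and L: "grass_linear L"
    and eig: "\<And>\<mu> v T. v \<in> V \<Longrightarrow> \<forall>a\<in>I. H a v = (\<lambda>T. \<mu> a * v T) \<Longrightarrow> D T * v T + L v T = \<nu> \<mu> * v T"
    and det: "det (krylov_mat (mat_diag N (\<lambda>t. D (e t)) + op_mat e N L)) \<noteq> 0"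
  shows "common_eigenspaces_one_dim I H V"
proof (rule common_eigenspaces_one_dimI)
  let ?M = "mat_diag N (\<lambda>t. D (e t)) + op_mat e N L"
  have M: "?M \<in> carrier_mat N N" by (simp add: op_mat_def)
  fix \<mu> v w
  assume v: "v \<in> V" "\<forall>a\<in>I. H a v = (\<lambda>T. \<mu> a * v T)" "v \<noteq> (\<lambda>T. 0)"
    and w: "w \<in> V" "\<forall>a\<in>I. H a w = (\<lambda>T. \<mu> a * w T)"
  have eigenvector: "?M *\<^sub>v coords e N u = \<nu> \<mu> \<cdot>\<^sub>v coords e N u"
    if "u \<in> V" "\<forall>a\<in>I. H a u = (\<lambda>T. \<mu> a * u T)" for u
  proof -
    have "?M *\<^sub>v coords e N u = mat_diag N (\<lambda>t. D (e t)) *\<^sub>v coords e N u + op_mat e N L *\<^sub>v coords e N u"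
      by (rule add_mult_distrib_mat_vec) (auto simp: op_mat_def coords_def)
    also have "\<dots> = coords e N (\<lambda>T. D T * u T) + coords e N (L u)"
      using that(1) V by (simp add: op_mat_mult_coords[OF L e] mat_diag_mult_coords)
    also have "\<dots> = coords e N (\<lambda>T. D T * u T + L u T)"
      by (auto simp: coords_def)
    also have "\<dots> = \<nu> \<mu> \<cdot>\<^sub>v coords e N u"
      using eig[OF that] by (simp add: coords_smult)
    finally show ?thesis .
  qed
  have supp: "\<forall>S. u S \<noteq> 0 \<longrightarrow> S \<in> B" if "u \<in> V" for u
    using that V by simp
  have "coords e N v \<noteq> coords e N (\<lambda>T. 0)"
    using coords_inject[OF e supp[OF v(1)]] v(3) by simp
  then have "coords e N v \<noteq> 0\<^sub>v N"
    by (simp add: coords_def zero_vec_def)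
  with eigenvectors_parallel_if_det_krylov_mat_nonzero[OF M det _ eigenvector[OF v(1,2)] _ _ eigenvector[OF w]]
  obtain c where "coords e N w = c \<cdot>\<^sub>v coords e N v"
    by (auto simp: coords_def)
  then have "coords e N w = coords e N (\<lambda>T. c * v T)"
    by (simp add: coords_smult)
  then show "\<exists>c. w = (\<lambda>T. c * v T)"
    using coords_inject[OF e supp[OF w(1)]] supp[OF v(1)] by auto
qed (use V H_smult in auto)

lemma generic_common_eigenspaces_one_dim:
  fixes H :: "(nat \<Rightarrow> complex) \<Rightarrow> (nat \<Rightarrow> complex) \<Rightarrow> nat \<Rightarrow> grass \<Rightarrow> grass"
    and d :: "(nat \<times> nat) set \<Rightarrow> (nat \<Rightarrow> complex) \<Rightarrow> (nat \<Rightarrow> complex) \<Rightarrow> complex"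
  assumes B: "finite B" and V: "V = {f. \<forall>S. f S \<noteq> 0 \<longrightarrow> S \<in> B}"
    and H_smult: "\<And>\<alpha> z a c f. H \<alpha> z a (\<lambda>T. c * f T) = (\<lambda>T. c * H \<alpha> z a f T)"
    and L: "grass_linear L"
    and eig: "\<And>\<alpha> z \<mu> v T. inj_on \<alpha> {..<n} \<Longrightarrow> inj_on z {..<k} \<Longrightarrow> v \<in> V \<Longrightarrow>
        \<forall>a\<in>I. H \<alpha> z a v = (\<lambda>T. \<mu> a * v T) \<Longrightarrow> d T \<alpha> z * v T + L v T = \<nu> \<alpha> z \<mu> * v T"
    and d_poly: "\<And>S. polyfun n k (d S)"
    and d_homogeneous: "\<And>S \<alpha> z s. d S (\<lambda>i. \<alpha> i / s) z = d S \<alpha> z / s"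
    and d_inj: "inj_on (\<lambda>S. d S \<alpha>\<^sub>0 z\<^sub>0) B"
  shows "generic n k (\<lambda>\<alpha> z. common_eigenspaces_one_dim I (H \<alpha> z) V)"
proof -
  define N where "N = card B"
  obtain e where e: "bij_betw e {0..<N} B" using ex_bij_betw_nat_finite[OF B] unfolding N_def by blast
  define M where "M \<alpha> z = mat_diag N (\<lambda>t. d (e t) \<alpha> z) + op_mat e N L" for \<alpha> z
  define P where "P \<alpha> z = det (krylov_mat (M \<alpha> z))" for \<alpha> z
  have "polyfun n k P"
  proof -
    interpret parameters: fun_subalgebra "\<lambda>f. polyfun n k (\<lambda>\<alpha> z. f (\<alpha>, z))"
      by unfold_locales (auto intro: polyfun.intros)
    have "polyfun n k (\<lambda>\<alpha> z. M \<alpha> z $$ (t, u))" if "t < N" "u < N" for t u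
      using that by (cases "t = u") (auto simp: M_def op_mat_def mat_diag_def intro: polyfun.intros d_poly)
    then show ?thesis
      unfolding P_def using parameters.det_krylov_mat[of "\<lambda>x. M (fst x) (snd x)" N]
      by (simp add: M_def op_mat_def)
  qed
  moreover have "\<exists>\<alpha> z. P \<alpha> z \<noteq> 0"
  proof -
    have "inj_on (\<lambda>t. d (e t) \<alpha>\<^sub>0 z\<^sub>0) {0..<N}"
      using comp_inj_on[OF bij_betw_imp_inj_on[OF e]] d_inj bij_betw_imp_surj_on[OF e]
      by (simp add: o_def)
    from exists_det_krylov_mat_nonzero[OF this, of "op_mat e N L"]
    obtain s where "det (krylov_mat (mat_diag N (\<lambda>t. d (e t) \<alpha>\<^sub>0 z\<^sub>0 / s) + op_mat e N L)) \<noteq> 0"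
      by (auto simp: op_mat_def)
    then have "P (\<lambda>i. \<alpha>\<^sub>0 i / s) z\<^sub>0 \<noteq> 0" by (simp add: P_def M_def d_homogeneous)
    then show ?thesis by blast
  qed
  moreover have "common_eigenspaces_one_dim I (H \<alpha> z) V"
    if "inj_on \<alpha> {..<n}" "inj_on z {..<k}" "P \<alpha> z \<noteq> 0" for \<alpha> z
    using that by (intro common_eigenspaces_one_dim_if_det_krylov_mat_nonzero[OF e V H_smult L eig])
      (auto simp: P_def M_def)
  ultimately show ?thesis unfolding generic_def by blast
qed

section \<open>The Gaudin Hamiltonians\<close>

lemma sum_offdiag_swap:
  assumes "finite A"
  shows "(\<Sum>a\<in>A. \<Sum>b\<in>A - {a}. g b a) = (\<Sum>a\<in>A. \<Sum>b\<in>A - {a}. g a b)"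
proof -
  have "A - {a} = {b \<in> A. a \<noteq> b}" for a by auto
  moreover have "A - {b} = {a \<in> A. a \<noteq> b}" for b by auto
  ultimately show ?thesis using sum.swap_restrict[OF assms assms, of "\<lambda>a b. g b a" "(\<noteq>)"] by simp
qed

lemma divide_diff_add_divide_diff:
  fixes x y :: "'a::field"
  assumes "x \<noteq> y"
  shows "x / (x - y) + y / (y - x) = 1"
proof -
  have "y / (y - x) = - (y / (x - y))"
    by (metis minus_diff_eq divide_minus_right)
  then have "x / (x - y) + y / (y - x) = x / (x - y) - y / (x - y)"
    by simp
  also have "\<dots> = (x - y) / (x - y)"
    by (rule diff_divide_distrib[symmetric])
  also have "\<dots> = 1"
    using assms by simp
  finally show ?thesis .
qed

lemma sum_offdiag_divided_differences:
  fixes x :: "'i \<Rightarrow> 'a::field_char_0"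
  assumes "finite A" "inj_on x A" and W: "\<And>a b. a \<in> A \<Longrightarrow> b \<in> A \<Longrightarrow> a \<noteq> b \<Longrightarrow> W a b = W b a"
  shows "(\<Sum>a\<in>A. x a * (\<Sum>b\<in>A - {a}. 1 / (x a - x b) * W a b)) = (\<Sum>a\<in>A. \<Sum>b\<in>A - {a}. W a b) / 2"
proof -
  define g where "g a b = x a * (1 / (x a - x b) * W a b)" for a b
  have pair: "g a b + g b a = W a b" if "a \<in> A" "b \<in> A - {a}" for a b
  proof -
    have "x a \<noteq> x b" using that assms(2) by (auto dest: inj_onD)
    have "W b a = W a b" using W that by auto
    then have "g a b + g b a = (x a / (x a - x b) + x b / (x b - x a)) * W a b"
      by (simp add: g_def algebra_simps)
    also have "x a / (x a - x b) + x b / (x b - x a) = 1"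
      using \<open>x a \<noteq> x b\<close> by (rule divide_diff_add_divide_diff)
    finally show ?thesis by simp
  qed
  have "2 * (\<Sum>a\<in>A. \<Sum>b\<in>A - {a}. g a b) = (\<Sum>a\<in>A. \<Sum>b\<in>A - {a}. g a b + g b a)"
    using sum_offdiag_swap[OF assms(1), of g] by (simp add: sum.distrib)
  also have "\<dots> = (\<Sum>a\<in>A. \<Sum>b\<in>A - {a}. W a b)"
    using pair by (intro sum.cong) auto
  finally have twice: "2 * (\<Sum>a\<in>A. \<Sum>b\<in>A - {a}. g a b) = (\<Sum>a\<in>A. \<Sum>b\<in>A - {a}. W a b)" .
  have "(\<Sum>a\<in>A. x a * (\<Sum>b\<in>A - {a}. 1 / (x a - x b) * W a b)) = (\<Sum>a\<in>A. \<Sum>b\<in>A - {a}. g a b)"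
    by (simp add: g_def sum_distrib_left)
  also have "\<dots> = (\<Sum>a\<in>A. \<Sum>b\<in>A - {a}. W a b) / 2"
    using twice by (simp add: eq_divide_eq mult.commute[of _ 2])
  finally show ?thesis .
qed

definition diagonal_eigenvalue ::
    "nat \<Rightarrow> nat \<Rightarrow> (nat \<times> nat) set \<Rightarrow> (nat \<Rightarrow> complex) \<Rightarrow> (nat \<Rightarrow> complex) \<Rightarrow> complex" where
  "diagonal_eigenvalue k n S \<alpha> z = (\<Sum>a<k. \<Sum>i<n. if (a, i) \<in> S then z a * \<alpha> i else 0)"

lemma polyfun_sum: "(\<And>a. a \<in> A \<Longrightarrow> polyfun n k (f a)) \<Longrightarrow> polyfun n k (\<lambda>\<alpha> z. \<Sum>a\<in>A. f a \<alpha> z)"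
  by (induction A rule: infinite_finite_induct) (auto intro: polyfun.intros)

lemma polyfun_if_zero: "polyfun n k p \<Longrightarrow> polyfun n k (\<lambda>\<alpha> z. if b then p \<alpha> z else 0)"
  by (cases b) (auto intro: polyfun.intros)

lemma polyfun_diagonal_eigenvalue: "polyfun n k (diagonal_eigenvalue k n S)"
  unfolding diagonal_eigenvalue_def by (auto intro!: polyfun_sum polyfun_if_zero polyfun.intros)

lemma diagonal_eigenvalue_divide: "diagonal_eigenvalue k n S (\<lambda>i. \<alpha> i / s) z = diagonal_eigenvalue k n S \<alpha> z / s"
  unfolding diagonal_eigenvalue_def sum_divide_distrib by (intro sum.cong refl) auto

lemma inj_on_diagonal_eigenvalue:
  "inj_on (\<lambda>S. diagonal_eigenvalue k n S (\<lambda>i. 2 ^ i) (\<lambda>a. 2 ^ (a * n))) (Pow ({..<k} \<times> {..<n}))"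
proof -
  let ?enc = "\<lambda>x :: nat \<times> nat. fst x * n + snd x"
  have enc_inj: "inj_on ?enc (UNIV \<times> {..<n})"
  proof (rule inj_onI, clarsimp)
    fix a i a' i' assume "i < n" "i' < n" "a * n + i = a' * n + i'"
    then have "(a * n + i) div n = (a' * n + i') div n" "(a * n + i) mod n = (a' * n + i') mod n"
      by simp_all
    then show "a = a' \<and> i = i'" using \<open>i < n\<close> \<open>i' < n\<close> by simp
  qed
  have encoded: "diagonal_eigenvalue k n S (\<lambda>i. 2 ^ i) (\<lambda>a. 2 ^ (a * n)) = of_nat (set_encode (?enc ` S))"
    if "S \<subseteq> {..<k} \<times> {..<n}" for S
  proof -
    have "diagonal_eigenvalue k n S (\<lambda>i. 2 ^ i) (\<lambda>a. 2 ^ (a * n))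
        = (\<Sum>x\<in>{..<k} \<times> {..<n}. if x \<in> S then 2 ^ (fst x * n) * 2 ^ snd x else 0)"
      by (simp add: diagonal_eigenvalue_def sum.cartesian_product case_prod_beta)
    also have "\<dots> = (\<Sum>x\<in>{..<k} \<times> {..<n}. if x \<in> S then 2 ^ ?enc x else 0)"
      by (intro sum.cong refl) (simp add: power_add)
    also have "\<dots> = (\<Sum>x\<in>S. 2 ^ ?enc x)"
      using that by (simp add: sum.If_cases Int_absorb1)
    also have "\<dots> = of_nat (set_encode (?enc ` S))"
    proof -
      have "inj_on ?enc S" using inj_on_subset[OF enc_inj] that by blast
      then show ?thesis by (simp add: set_encode_def sum.reindex)
    qed
    finally show ?thesis .
  qed
  show ?thesis
  proof (rule inj_onI)
    fix S S' assume S: "S \<in> Pow ({..<k} \<times> {..<n})" "S' \<in> Pow ({..<k} \<times> {..<n})"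
      and "diagonal_eigenvalue k n S (\<lambda>i. 2 ^ i) (\<lambda>a. 2 ^ (a * n))
         = diagonal_eigenvalue k n S' (\<lambda>i. 2 ^ i) (\<lambda>a. 2 ^ (a * n))"
    then have "set_encode (?enc ` S) = set_encode (?enc ` S')" by (simp add: encoded)
    moreover have "finite S" "finite S'" using S finite_subset[of _ "{..<k} \<times> {..<n}"] by auto
    ultimately have "?enc ` S = ?enc ` S'" by (simp add: set_encode_eq)
    moreover have "S \<subseteq> UNIV \<times> {..<n}" "S' \<subseteq> UNIV \<times> {..<n}" using S by auto
    ultimately show "S = S'" by (simp add: inj_on_image_eq_iff[OF enc_inj])
  qed
qed

definition weight_monomials :: "nat \<Rightarrow> nat \<Rightarrow> (nat \<Rightarrow> nat) \<Rightarrow> (nat \<Rightarrow> nat) \<Rightarrow> (nat \<times> nat) set set" where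
  "weight_monomials k n l m = {S. S \<subseteq> {..<k} \<times> {..<n} \<and>
      (\<forall>a<k. card {i. (a, i) \<in> S} = l a) \<and> (\<forall>i<n. card {a. (a, i) \<in> S} = m i)}"

lemma Pweight_eq: "Pweight k n l m = {f. \<forall>S. f S \<noteq> 0 \<longrightarrow> S \<in> weight_monomials k n l m}"
  by (simp add: Pweight_def weight_monomials_def)

lemma weight_monomials_subset: "weight_monomials k n l m \<subseteq> Pow ({..<k} \<times> {..<n})"
  by (auto simp: weight_monomials_def)

lemma finite_weight_monomials: "finite (weight_monomials k n l m)"
  using weight_monomials_subset by (rule finite_subset) simp

lemma finite_monomials_Pweight:
  assumes "f \<in> Pweight k n l m"
  shows "finite_monomials f"
  unfolding finite_monomials_def
proof (intro allI impI)
  fix S :: "(nat \<times> nat) set" assume "infinite S"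
  show "f S = 0"
  proof (rule ccontr)
    assume "f S \<noteq> 0"
    then have "S \<in> weight_monomials k n l m" using assms by (simp add: Pweight_eq)
    then have "S \<subseteq> {..<k} \<times> {..<n}" using weight_monomials_subset by blast
    then show False using \<open>infinite S\<close> finite_subset by blast
  qed
qed

lemma E_diag: "E a i a i f T = (if (a, i) \<in> T then f T else 0)"
proof -
  have "lex_sign T (a, i) = lex_sign (T - {(a, i)}) (a, i)"
    by (metis insert_Diff_single lex_sign_insert_self)
  then show ?thesis
    by (simp add: E_def xop_apply dop_apply insert_absorb lex_sign_square)
qed

lemma grass_linear_E: "grass_linear (E a i b j)"
  unfolding E_def[abs_def] by (rule grass_linear_comp[OF grass_linear_xop grass_linear_dop])

definition Omega :: "nat \<Rightarrow> nat \<Rightarrow> nat \<Rightarrow> grass \<Rightarrow> grass" where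
  "Omega n a b f = (\<lambda>T. \<Sum>i<n. \<Sum>j<n. E a i a j (E b j b i f) T)"

definition Omega' :: "nat \<Rightarrow> nat \<Rightarrow> nat \<Rightarrow> grass \<Rightarrow> grass" where
  "Omega' k i j f = (\<lambda>T. \<Sum>a<k. \<Sum>b<k. E a i b i (E b j a j f) T)"

lemma Omega_swap:
  assumes "a \<noteq> b" "finite_monomials f"
  shows "Omega n a b f = Omega n b a f"
proof
  fix T
  have "E a i a j (E b j b i f) = E b j b i (E a i a j f)" for i j
    unfolding E_def using assms by (intro xop_dop_commute) auto
  then have "Omega n a b f T = (\<Sum>i<n. \<Sum>j<n. E b j b i (E a i a j f) T)"
    by (simp add: Omega_def)
  also have "\<dots> = Omega n b a f T"
    unfolding Omega_def by (rule sum.swap)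
  finally show "Omega n a b f T = Omega n b a f T" .
qed

lemma Omega'_swap:
  assumes "i \<noteq> j" "finite_monomials f"
  shows "Omega' k i j f = Omega' k j i f"
proof
  fix T
  have "E a i b i (E b j a j f) = E b j a j (E a i b i f)" for a b
    unfolding E_def using assms by (intro xop_dop_commute) auto
  then have "Omega' k i j f T = (\<Sum>a<k. \<Sum>b<k. E b j a j (E a i b i f) T)"
    by (simp add: Omega'_def)
  also have "\<dots> = Omega' k j i f T"
    unfolding Omega'_def by (rule sum.swap)
  finally show "Omega' k i j f T = Omega' k j i f T" .
qed

lemma grass_linear_Omega_sum: "grass_linear (\<lambda>f T. (\<Sum>a<k. \<Sum>b\<in>{..<k} - {a}. Omega n a b f T) / 2)"
proof -
  have Omega: "grass_linear (Omega n a b)" for a b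
    unfolding Omega_def[abs_def]
    by (intro grass_linear_sum_op grass_linear_comp[OF grass_linear_E grass_linear_E])
  show ?thesis
    using grass_linear_smult_op[OF grass_linear_sum_op[OF grass_linear_sum_op[OF Omega]], where a = "1 / 2"]
    by simp
qed

lemma grass_linear_Omega'_sum: "grass_linear (\<lambda>f T. - (\<Sum>i<n. \<Sum>j\<in>{..<n} - {i}. Omega' k i j f T) / 2)"
proof -
  have Omega': "grass_linear (Omega' k i j)" for i j
    unfolding Omega'_def[abs_def]
    by (intro grass_linear_sum_op grass_linear_comp[OF grass_linear_E grass_linear_E])
  show ?thesis
    using grass_linear_smult_op[OF grass_linear_sum_op[OF grass_linear_sum_op[OF Omega']], where a = "- 1 / 2"]
    by simp
qed

lemma Hop_smult: "Hop k n \<alpha> z a (\<lambda>T. c * f T) = (\<lambda>T. c * Hop k n \<alpha> z a f T)"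
  unfolding Hop_def by (simp add: grass_linear_smult[OF grass_linear_E] sum_distrib_left distrib_left mult_ac)

lemma Hop'_smult: "Hop' k n \<alpha> z i (\<lambda>T. c * f T) = (\<lambda>T. c * Hop' k n \<alpha> z i f T)"
  unfolding Hop'_def by (simp add: grass_linear_smult[OF grass_linear_E] sum_distrib_left distrib_left mult_ac)

lemma Hop_weighted_sum:
  assumes "inj_on z {..<k}" "finite_monomials f"
  shows "(\<Sum>a<k. z a * Hop k n \<alpha> z a f T)
    = diagonal_eigenvalue k n T \<alpha> z * f T + (\<Sum>a<k. \<Sum>b\<in>{..<k} - {a}. Omega n a b f T) / 2"
proof -
  have "Hop k n \<alpha> z a f T
      = (\<Sum>i<n. \<alpha> i * E a i a i f T) + (\<Sum>b\<in>{..<k} - {a}. 1 / (z a - z b) * Omega n a b f T)" for a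
    unfolding Hop_def Omega_def by (rule refl)
  then have "(\<Sum>a<k. z a * Hop k n \<alpha> z a f T) = (\<Sum>a<k. z a * (\<Sum>i<n. \<alpha> i * E a i a i f T))
      + (\<Sum>a<k. z a * (\<Sum>b\<in>{..<k} - {a}. 1 / (z a - z b) * Omega n a b f T))"
    by (simp only: distrib_left sum.distrib)
  also have "(\<Sum>a<k. z a * (\<Sum>i<n. \<alpha> i * E a i a i f T)) = diagonal_eigenvalue k n T \<alpha> z * f T"
    unfolding diagonal_eigenvalue_def sum_distrib_left sum_distrib_right
    by (intro sum.cong refl) (simp add: E_diag)
  also have "(\<Sum>a<k. z a * (\<Sum>b\<in>{..<k} - {a}. 1 / (z a - z b) * Omega n a b f T))
      = (\<Sum>a<k. \<Sum>b\<in>{..<k} - {a}. Omega n a b f T) / 2"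
    using assms Omega_swap[OF _ assms(2)] by (intro sum_offdiag_divided_differences) auto
  finally show ?thesis .
qed

lemma Hop'_weighted_sum:
  assumes "inj_on \<alpha> {..<n}" "finite_monomials f"
  shows "(\<Sum>i<n. \<alpha> i * Hop' k n \<alpha> z i f T)
    = diagonal_eigenvalue k n T \<alpha> z * f T - (\<Sum>i<n. \<Sum>j\<in>{..<n} - {i}. Omega' k i j f T) / 2"
proof -
  have "1 / (\<alpha> j - \<alpha> i) * Omega' k i j f T = 1 / (\<alpha> i - \<alpha> j) * - Omega' k i j f T" for i j
    by (metis minus_diff_eq divide_minus_right mult_minus_left mult_minus_right)
  then have "Hop' k n \<alpha> z i f T = (\<Sum>a<k. z a * E a i a i f T)
      + (\<Sum>j\<in>{..<n} - {i}. 1 / (\<alpha> i - \<alpha> j) * - Omega' k i j f T)" for i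
    unfolding Hop'_def Omega'_def by simp
  then have "(\<Sum>i<n. \<alpha> i * Hop' k n \<alpha> z i f T) = (\<Sum>i<n. \<alpha> i * (\<Sum>a<k. z a * E a i a i f T))
      + (\<Sum>i<n. \<alpha> i * (\<Sum>j\<in>{..<n} - {i}. 1 / (\<alpha> i - \<alpha> j) * - Omega' k i j f T))"
    by (simp only: distrib_left sum.distrib)
  also have "(\<Sum>i<n. \<alpha> i * (\<Sum>a<k. z a * E a i a i f T)) = diagonal_eigenvalue k n T \<alpha> z * f T"
    unfolding diagonal_eigenvalue_def sum_distrib_left sum_distrib_right
    by (subst sum.swap) (intro sum.cong refl, simp add: E_diag)
  also have "(\<Sum>i<n. \<alpha> i * (\<Sum>j\<in>{..<n} - {i}. 1 / (\<alpha> i - \<alpha> j) * - Omega' k i j f T))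
      = (\<Sum>i<n. \<Sum>j\<in>{..<n} - {i}. - Omega' k i j f T) / 2"
    using assms Omega'_swap[OF _ assms(2)] by (intro sum_offdiag_divided_differences) auto
  finally show ?thesis by (simp add: sum_negf)
qed

lemma Hop_common_eigenvector:
  assumes "inj_on z {..<k}" "v \<in> Pweight k n l m" "\<forall>a\<in>{..<k}. Hop k n \<alpha> z a v = (\<lambda>T. \<mu> a * v T)"
  shows "diagonal_eigenvalue k n T \<alpha> z * v T + (\<Sum>a<k. \<Sum>b\<in>{..<k} - {a}. Omega n a b v T) / 2
    = (\<Sum>a<k. z a * \<mu> a) * v T"
proof -
  have "(\<Sum>a<k. z a * Hop k n \<alpha> z a v T) = (\<Sum>a<k. z a * \<mu> a) * v T"
    using assms(3) by (simp add: sum_distrib_right mult.assoc)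
  then show ?thesis
    by (simp add: Hop_weighted_sum[OF assms(1) finite_monomials_Pweight[OF assms(2)]])
qed

lemma Hop'_common_eigenvector:
  assumes "inj_on \<alpha> {..<n}" "v \<in> Pweight k n l m" "\<forall>i\<in>{..<n}. Hop' k n \<alpha> z i v = (\<lambda>T. \<mu> i * v T)"
  shows "diagonal_eigenvalue k n T \<alpha> z * v T + - (\<Sum>i<n. \<Sum>j\<in>{..<n} - {i}. Omega' k i j v T) / 2
    = (\<Sum>i<n. \<alpha> i * \<mu> i) * v T"
proof -
  have "(\<Sum>i<n. \<alpha> i * Hop' k n \<alpha> z i v T) = (\<Sum>i<n. \<alpha> i * \<mu> i) * v T"
    using assms(3) by (simp add: sum_distrib_right mult.assoc)
  then show ?thesis
    by (simp add: Hop'_weighted_sum[OF assms(1) finite_monomials_Pweight[OF assms(2)]])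
qed

theorem lemma5p6:
  fixes k n :: nat and l m :: "nat \<Rightarrow> nat"
  assumes "Zkn k n l m"
  shows "generic n k (\<lambda>\<alpha> z.
           common_eigenspaces_one_dim {..<k} (Hop k n \<alpha> z) (Pweight k n l m))
       \<and> generic n k (\<lambda>\<alpha> z.
           common_eigenspaces_one_dim {..<n} (Hop' k n \<alpha> z) (Pweight k n l m))"
proof
  have d_inj: "inj_on (\<lambda>S. diagonal_eigenvalue k n S (\<lambda>i. 2 ^ i) (\<lambda>a. 2 ^ (a * n))) (weight_monomials k n l m)"
    using inj_on_diagonal_eigenvalue weight_monomials_subset by (rule inj_on_subset)
  show "generic n k (\<lambda>\<alpha> z. common_eigenspaces_one_dim {..<k} (Hop k n \<alpha> z) (Pweight k n l m))"
    by (rule generic_common_eigenspaces_one_dim[OF finite_weight_monomials Pweight_eq Hop_smult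
          grass_linear_Omega_sum _ polyfun_diagonal_eigenvalue diagonal_eigenvalue_divide d_inj])
      (rule Hop_common_eigenvector)
  show "generic n k (\<lambda>\<alpha> z. common_eigenspaces_one_dim {..<n} (Hop' k n \<alpha> z) (Pweight k n l m))"
    by (rule generic_common_eigenspaces_one_dim[OF finite_weight_monomials Pweight_eq Hop'_smult
          grass_linear_Omega'_sum _ polyfun_diagonal_eigenvalue diagonal_eigenvalue_divide d_inj])
      (rule Hop'_common_eigenvector)
qed

end
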